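(* Let $M$ and $N$ be finitely generated, semipositive binoids of finite dimension such that $e_{HK}(M)$ and $e_{HK}(N)$ exist. Then $e_{HK}(M\wedge N)$ exists and $$e_{HK}(M\wedge N)=e_{HK}(M)\cdot e_{HK}(N).$$
   Context: A binoid $(N,+,0,\infty)$ is a commutative monoid $(N,+,0)$ with an element $\infty$ satisfying $a+\infty=\infty$ for all $a\in N$. Write $N^\bullet=N\setminus\{\infty\}$, $N^\times$ for the group of units of $N$ and $N_+=N\setminus N^\times$. $N$ is finitely generated if it is finitely generated as a monoid; semipositive if $N\neq\{\infty\}$ and $N^\times$ is finite. The smash product $M\wedge N$ is the binoid $(M^\bullet\times N^\bullet)\cup\{\infty\}$ with $(a,b)+(c,d)=(a+c,b+d)$ if $a+c\neq\infty$ and $b+d\neq\infty$, and $=\infty$ otherwise. An ideal of $N$ is a nonempty subset $I\subseteq N$ with $I+N\subseteq I$. For an ideal $I$ and $q\in\mathbb N_+$, $[q]I$ denotes the ideal generated by $\{qa: a\in I\}$; $N/I=(N\setminus I)\cup\{\infty\}$. A prime ideal is an ideal $\mathfrak p\neq N$ such that $a+b\in\mathfrak p$ implies $a\in\mathfrak p$ or $b\in\mathfrak p$; the (combinatorial) dimension $\dim N$ is the supremum of the lengths $k$ of chains $\mathfrak p_0\subsetneq\cdots\subsetneq\mathfrak p_k$ of prime ideals. $\operatorname{HKF}(N,q)=\#N/[q]N_+$, with $\#S=|S|-1$ for a finite pointed set $S$, and $e_{HK}(N)=\lim_{q\to\infty}\operatorname{HKF}(N,q)/q^{\dim N}$ over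 all positive integers $q$, when it exists. *)

theory Defs
  imports Complex_Main "HOL-Library.Extended_Nat"
begin

record 'a binoid =
  bcarrier :: "'a set"
  badd :: "'a \<Rightarrow> 'a \<Rightarrow> 'a"
  bzero :: 'a
  binf :: 'a

definition is_binoid :: "'a binoid \<Rightarrow> bool" where
  "is_binoid B \<longleftrightarrow>
     bzero B \<in> bcarrier B \<and> binf B \<in> bcarrier B \<and>
     (\<forall>a\<in>bcarrier B. \<forall>b\<in>bcarrier B. badd B a b \<in> bcarrier B) \<and>
     (\<forall>a\<in>bcarrier B. \<forall>b\<in>bcarrier B. \<forall>c\<in>bcarrier B.
        badd B (badd B a b) c = badd B a (badd B b c)) \<and>
     (\<forall>a\<in>bcarrier B. \<forall>b\<in>bcarrier B. badd B a b = badd B b a) \<and>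
     (\<forall>a\<in>bcarrier B. badd B a (bzero B) = a) \<and>
     (\<forall>a\<in>bcarrier B. badd B a (binf B) = binf B)"

inductive_set bgen :: "'a binoid \<Rightarrow> 'a set \<Rightarrow> 'a set" for B G where
  zero: "bzero B \<in> bgen B G"
| gen: "g \<in> G \<Longrightarrow> g \<in> bgen B G"
| add: "a \<in> bgen B G \<Longrightarrow> b \<in> bgen B G \<Longrightarrow> badd B a b \<in> bgen B G"

definition fin_gen :: "'a binoid \<Rightarrow> bool" where
  "fin_gen B \<longleftrightarrow> (\<exists>G. finite G \<and> G \<subseteq> bcarrier B \<and> bgen B G = bcarrier B)"

definition bunits :: "'a binoid \<Rightarrow> 'a set" where
  "bunits B = {a \<in> bcarrier B. \<exists>b\<in>bcarrier B. badd B a b = bzero B}"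

definition bplus_part :: "'a binoid \<Rightarrow> 'a set" where
  "bplus_part B = bcarrier B - bunits B"

definition semipositive :: "'a binoid \<Rightarrow> bool" where
  "semipositive B \<longleftrightarrow> bcarrier B \<noteq> {binf B} \<and> finite (bunits B)"

definition is_ideal :: "'a binoid \<Rightarrow> 'a set \<Rightarrow> bool" where
  "is_ideal B I \<longleftrightarrow> I \<noteq> {} \<and> I \<subseteq> bcarrier B \<and>
     (\<forall>a\<in>I. \<forall>b\<in>bcarrier B. badd B a b \<in> I)"

definition is_prime_ideal :: "'a binoid \<Rightarrow> 'a set \<Rightarrow> bool" where
  "is_prime_ideal B P \<longleftrightarrow> is_ideal B P \<and> P \<noteq> bcarrier B \<and>
     (\<forall>a\<in>bcarrier B. \<forall>b\<in>bcarrier B. badd B a b \<in> P \<longrightarrow> a \<in> P \<or> b \<in> P)"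

definition bdim :: "'a binoid \<Rightarrow> enat" where
  "bdim B = Sup {enat k | k. \<exists>p :: nat \<Rightarrow> 'a set.
      (\<forall>i\<le>k. is_prime_ideal B (p i)) \<and> (\<forall>i<k. p i \<subset> p (Suc i))}"

definition bmult :: "'a binoid \<Rightarrow> nat \<Rightarrow> 'a \<Rightarrow> 'a" where
  "bmult B q a = (badd B a ^^ q) (bzero B)"

definition ideal_gen :: "'a binoid \<Rightarrow> 'a set \<Rightarrow> 'a set" where
  "ideal_gen B S = {badd B s n | s n. s \<in> S \<and> n \<in> bcarrier B}"

definition frob_ideal :: "'a binoid \<Rightarrow> nat \<Rightarrow> 'a set \<Rightarrow> 'a set" where
  "frob_ideal B q I = ideal_gen B (bmult B q ` I)"

text \<open>HKF(N,q) = #(N / [q]N_+), the pointed set N / I = (N \ I) \<union> {\<infinity>} with # S = |S| - 1.\<close>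
definition HKF :: "'a binoid \<Rightarrow> nat \<Rightarrow> nat" where
  "HKF B q = card ((bcarrier B - frob_ideal B q (bplus_part B)) \<union> {binf B}) - 1"

definition HK_ratio :: "'a binoid \<Rightarrow> nat \<Rightarrow> real" where
  "HK_ratio B q = real (HKF B q) / real q ^ the_enat (bdim B)"

definition ehk_exists :: "'a binoid \<Rightarrow> bool" where
  "ehk_exists B \<longleftrightarrow> convergent (HK_ratio B)"

definition ehk :: "'a binoid \<Rightarrow> real" where
  "ehk B = lim (HK_ratio B)"

text \<open>Smash product; None plays the role of \<infinity>.\<close>
definition smash :: "'a binoid \<Rightarrow> 'b binoid \<Rightarrow> ('a \<times> 'b) option binoid" where
  "smash M N =
    \<lparr> bcarrier = insert None (Some ` ((bcarrier M - {binf M}) \<times> (bcarrier N - {binf N}))),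
      badd = (\<lambda>x y. case (x, y) of
                 (Some (a, b), Some (c, d)) \<Rightarrow>
                    (if badd M a c \<noteq> binf M \<and> badd N b d \<noteq> binf N
                     then Some (badd M a c, badd N b d) else None)
               | _ \<Rightarrow> None),
      bzero = Some (bzero M, bzero N),
      binf = None \<rparr>"

end

theory Submission
  imports Defs
begin

text \<open>
  A pair (a, b) lies in
  [q](M \<and> N)_+ iff a \<in> [q]M_+ or b \<in> [q]N_+, because the units of M \<and> N are the pairs of units;
  hence (M \<and> N)/[q](M \<and> N)_+ is the smash product of M/[q]M_+ and N/[q]N_+, and the
  Hilbert-Kunz function is multiplicative for every q. Likewise every prime ideal of M \<and> N is
  P \<and> N \<union> M \<and> Q for the primes P, Q it induces on the factors, so a chain of primes in
  M \<and> N climbs in one factor at a time, and dim (M \<and> N) = dim M + dim N. The Hilbert-Kunz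
  ratios of M \<and> N are therefore the products of those of M and N, and so are their limits.
\<close>

lemma prime_ideal_add_mem:
  "is_prime_ideal B P \<Longrightarrow> a \<in> P \<Longrightarrow> b \<in> bcarrier B \<Longrightarrow> badd B a b \<in> P"
  unfolding is_prime_ideal_def is_ideal_def by blast

lemma prime_ideal_add_memD:
  "is_prime_ideal B P \<Longrightarrow> a \<in> bcarrier B \<Longrightarrow> b \<in> bcarrier B \<Longrightarrow> badd B a b \<in> P \<Longrightarrow>
    a \<in> P \<or> b \<in> P"
  unfolding is_prime_ideal_def by blast

definition binoid_hom :: "'a binoid \<Rightarrow> 'b binoid \<Rightarrow> ('a \<Rightarrow> 'b) \<Rightarrow> bool" where
  "binoid_hom B C h \<longleftrightarrow>
     (\<forall>a\<in>bcarrier B. h a \<in> bcarrier C) \<and> h (bzero B) = bzero C \<and> h (binf B) = binf C \<and>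
     (\<forall>a\<in>bcarrier B. \<forall>b\<in>bcarrier B. h (badd B a b) = badd C (h a) (h b))"

locale binoid =
  fixes B :: "'a binoid"
  assumes is_binoid: "is_binoid B"
begin

lemma zero_closed [simp]: "bzero B \<in> bcarrier B"
  and inf_closed [simp]: "binf B \<in> bcarrier B"
  and add_closed: "a \<in> bcarrier B \<Longrightarrow> b \<in> bcarrier B \<Longrightarrow> badd B a b \<in> bcarrier B"
  and add_commute: "a \<in> bcarrier B \<Longrightarrow> b \<in> bcarrier B \<Longrightarrow> badd B a b = badd B b a"
  and add_zero_right [simp]: "a \<in> bcarrier B \<Longrightarrow> badd B a (bzero B) = a"
  and add_inf_right [simp]: "a \<in> bcarrier B \<Longrightarrow> badd B a (binf B) = binf B"
  using is_binoid unfolding is_binoid_def by blast+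

lemma add_assoc:
  "a \<in> bcarrier B \<Longrightarrow> b \<in> bcarrier B \<Longrightarrow> c \<in> bcarrier B \<Longrightarrow>
    badd B (badd B a b) c = badd B a (badd B b c)"
  using is_binoid unfolding is_binoid_def by blast

lemma add_zero_left [simp]: "a \<in> bcarrier B \<Longrightarrow> badd B (bzero B) a = a"
  using add_commute[of a "bzero B"] by simp

lemma add_inf_left [simp]: "a \<in> bcarrier B \<Longrightarrow> badd B (binf B) a = binf B"
  using add_commute[of a "binf B"] by simp

lemma add_inf_extend_right:
  "a \<in> bcarrier B \<Longrightarrow> b \<in> bcarrier B \<Longrightarrow> c \<in> bcarrier B \<Longrightarrow> badd B a b = binf B \<Longrightarrow>
    badd B a (badd B b c) = binf B"
  by (metis add_assoc add_inf_left)

lemma add_inf_extend_left: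
  "a \<in> bcarrier B \<Longrightarrow> b \<in> bcarrier B \<Longrightarrow> c \<in> bcarrier B \<Longrightarrow> badd B b c = binf B \<Longrightarrow>
    badd B (badd B a b) c = binf B"
  by (metis add_assoc add_inf_right)

lemma ideal_inf_mem:
  assumes "is_ideal B I"
  shows "binf B \<in> I"
proof -
  obtain a where "a \<in> I" "a \<in> bcarrier B"
    using assms unfolding is_ideal_def by blast
  with assms show ?thesis
    unfolding is_ideal_def by (metis add_inf_right inf_closed)
qed

lemma prime_ideal_zero_not_mem:
  assumes "is_prime_ideal B P"
  shows "bzero B \<notin> P"
proof
  assume "bzero B \<in> P"
  then have "bcarrier B \<subseteq> P"
    using assms unfolding is_prime_ideal_def is_ideal_def by (metis add_zero_left subsetI)
  with assms show False
    unfolding is_prime_ideal_def is_ideal_def by blast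
qed

lemma add_mem_bunits_iff:
  assumes a: "a \<in> bcarrier B" and b: "b \<in> bcarrier B"
  shows "badd B a b \<in> bunits B \<longleftrightarrow> a \<in> bunits B \<and> b \<in> bunits B"
proof
  assume "badd B a b \<in> bunits B"
  then obtain c where c: "c \<in> bcarrier B" "badd B (badd B a b) c = bzero B"
    unfolding bunits_def by blast
  have "badd B a (badd B b c) = bzero B" "badd B b (badd B a c) = bzero B"
    using c a b by (simp_all add: add_assoc flip: add_assoc[of b a c] add_commute[of a b])
  then show "a \<in> bunits B \<and> b \<in> bunits B"
    using a b c unfolding bunits_def by (blast intro: add_closed)
next
  assume "a \<in> bunits B \<and> b \<in> bunits B"
  then obtain c d where c: "c \<in> bcarrier B" "badd B a c = bzero B"
    and d: "d \<in> bcarrier B" "badd B b d = bzero B"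
    unfolding bunits_def by blast
  have "badd B (badd B a b) (badd B c d) = badd B (badd B a c) (badd B b d)"
    using a b c d by (simp add: add_assoc add_closed add_commute[of b] flip: add_assoc[of b c d])
  then show "badd B a b \<in> bunits B"
    using a b c d unfolding bunits_def by (auto intro: add_closed)
qed

lemma prime_ideal_vimage:
  assumes C: "binoid C" and h: "binoid_hom B C h" and P: "is_prime_ideal C P"
  shows "is_prime_ideal B (bcarrier B \<inter> h -` P)"
proof -
  have hom: "\<And>a. a \<in> bcarrier B \<Longrightarrow> h a \<in> bcarrier C"
    "\<And>a b. a \<in> bcarrier B \<Longrightarrow> b \<in> bcarrier B \<Longrightarrow> h (badd B a b) = badd C (h a) (h b)"
    using h unfolding binoid_hom_def by auto
  let ?I = "bcarrier B \<inter> h -` P"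
  have "binf B \<in> ?I"
    using h binoid.ideal_inf_mem[OF C] P unfolding binoid_hom_def is_prime_ideal_def by simp
  moreover have "bzero B \<notin> ?I"
    using h binoid.prime_ideal_zero_not_mem[OF C P] unfolding binoid_hom_def by simp
  moreover have "badd B a b \<in> ?I" if "a \<in> ?I" "b \<in> bcarrier B" for a b
    using that hom prime_ideal_add_mem[OF P] add_closed by simp
  moreover have "a \<in> ?I \<or> b \<in> ?I" if "badd B a b \<in> ?I" "a \<in> bcarrier B" "b \<in> bcarrier B" for a b
    using that hom prime_ideal_add_memD[OF P] by simp
  ultimately show ?thesis
    unfolding is_prime_ideal_def is_ideal_def using zero_closed by blast
qed

lemma bmult_Suc: "bmult B (Suc q) a = badd B a (bmult B q a)"
  by (simp add: bmult_def)

lemma bmult_closed: "a \<in> bcarrier B \<Longrightarrow> bmult B q a \<in> bcarrier B"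
  by (induction q) (auto simp: bmult_def add_closed)

lemma bmult_zero [simp]: "bmult B q (bzero B) = bzero B"
  by (induction q) (simp_all add: bmult_def)

lemma bmult_inf [simp]: "0 < q \<Longrightarrow> bmult B q (binf B) = binf B"
  by (cases q) (simp_all add: bmult_Suc bmult_closed)

end

locale nontrivial_binoid = binoid +
  assumes nontrivial: "bcarrier B \<noteq> {binf B}"
begin

lemma zero_neq_inf [simp]: "bzero B \<noteq> binf B"
proof
  assume "bzero B = binf B"
  then have "a = binf B" if "a \<in> bcarrier B" for a
    using that add_zero_right[of a] add_inf_right[of a] by simp
  with nontrivial inf_closed show False by blast
qed

lemma bplus_part_prime: "is_prime_ideal B (bplus_part B)"
proof -
  have "binf B \<notin> bunits B" "bzero B \<in> bunits B"
    using zero_neq_inf[symmetric] unfolding bunits_def by auto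
  then show ?thesis
    using add_mem_bunits_iff add_closed unfolding is_prime_ideal_def is_ideal_def bplus_part_def
    by (auto intro: inf_closed)
qed

end

section \<open>The smash product\<close>

lemma smash_simps [simp]:
  "bcarrier (smash M N) =
     insert None (Some ` ((bcarrier M - {binf M}) \<times> (bcarrier N - {binf N})))"
  "bzero (smash M N) = Some (bzero M, bzero N)"
  "binf (smash M N) = None"
  "badd (smash M N) None y = None"
  "badd (smash M N) x None = None"
  "badd (smash M N) (Some (a, b)) (Some (c, d)) =
     (if badd M a c \<noteq> binf M \<and> badd N b d \<noteq> binf N
      then Some (badd M a c, badd N b d) else None)"
  by (simp_all add: smash_def split: option.split)

locale smash_setting = M: nontrivial_binoid M + N: nontrivial_binoid N
  for M :: "'a binoid" and N :: "'b binoid"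
begin

lemma smash_carrierE:
  assumes "x \<in> bcarrier (smash M N)"
  obtains "x = None"
  | a b where "x = Some (a, b)" "a \<in> bcarrier M" "a \<noteq> binf M" "b \<in> bcarrier N" "b \<noteq> binf N"
  using assms by auto

lemma is_binoid_smash: "is_binoid (smash M N)"
proof -
  have assoc: "badd (smash M N) (badd (smash M N) x y) z = badd (smash M N) x (badd (smash M N) y z)"
    if "x \<in> bcarrier (smash M N)" "y \<in> bcarrier (smash M N)" "z \<in> bcarrier (smash M N)" for x y z
    using that M.add_assoc N.add_assoc M.add_closed N.add_closed
      M.add_inf_extend_left M.add_inf_extend_right N.add_inf_extend_left N.add_inf_extend_right
    by (elim smash_carrierE) auto
  show ?thesis
    unfolding is_binoid_def using assoc
    by (auto simp: M.add_closed N.add_closed M.add_commute N.add_commute)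
qed

sublocale S: nontrivial_binoid "smash M N"
proof
  show "is_binoid (smash M N)" by (rule is_binoid_smash)
  have "Some (bzero M, bzero N) \<in> bcarrier (smash M N)" by simp
  then show "bcarrier (smash M N) \<noteq> {binf (smash M N)}"
    by (metis option.distinct(1) singletonD smash_simps(3))
qed

end

section \<open>Prime ideals and dimension of the smash product\<close>

definition prime_chain :: "'a binoid \<Rightarrow> (nat \<Rightarrow> 'a set) \<Rightarrow> nat \<Rightarrow> bool" where
  "prime_chain B p k \<longleftrightarrow> (\<forall>i\<le>k. is_prime_ideal B (p i)) \<and> (\<forall>i<k. p i \<subset> p (Suc i))"

lemma bdim_eq_Sup_prime_chain: "bdim B = Sup {enat k |k. \<exists>p. prime_chain B p k}"
  by (simp add: bdim_def prime_chain_def)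

lemma prime_chain_le_bdim: "prime_chain B p k \<Longrightarrow> enat k \<le> bdim B"
  unfolding bdim_eq_Sup_prime_chain by (auto intro: Sup_upper)

lemma prime_chain_truncate: "prime_chain B p k \<Longrightarrow> m \<le> k \<Longrightarrow> prime_chain B p m"
  unfolding prime_chain_def by auto

lemma add_le_enat_by_finite:
  fixes x y z :: enat
  assumes "\<And>a b. enat a \<le> x \<Longrightarrow> enat b \<le> y \<Longrightarrow> enat (a + b) \<le> z"
  shows "x + y \<le> z"
proof (cases "x = \<infinity> \<or> y = \<infinity>")
  case True
  then have "enat n \<le> z" for n
    using assms[of n 0] assms[of 0 n] by (auto simp flip: zero_enat_def)
  then have "z = \<infinity>"
    by (metis Suc_n_not_le_n enat.exhaust enat_ord_simps(1))
  then show ?thesis by simp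
next
  case False
  then obtain a b where "x = enat a" "y = enat b"
    by auto
  then show ?thesis
    using assms[of a b] by simp
qed

context nontrivial_binoid
begin

lemma prime_chain_of_le_bdim:
  assumes "enat n \<le> bdim B"
  obtains p where "prime_chain B p n"
proof -
  have "\<exists>p. prime_chain B p n"
  proof (rule ccontr)
    assume "\<nexists>p. prime_chain B p n"
    then have short: "k < n" if "prime_chain B p k" for p k
      using that prime_chain_truncate not_less by metis
    have "prime_chain B (\<lambda>_. bplus_part B) 0"
      using bplus_part_prime unfolding prime_chain_def by simp
    then have "0 < n"
      using short by blast
    have "bdim B \<le> enat (n - 1)"
    proof (unfold bdim_eq_Sup_prime_chain, rule Sup_least)
      fix x assume "x \<in> {enat k |k. \<exists>p. prime_chain B p k}"
      then obtain k p where "x = enat k" "prime_chain B p k"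
        by blast
      then show "x \<le> enat (n - 1)"
        using short by fastforce
    qed
    with assms \<open>0 < n\<close> show False
      using order_trans[of "enat n" "bdim B" "enat (n - 1)"] by simp
  qed
  then show thesis
    using that by blast
qed

end

definition smash_ideal :: "'a binoid \<Rightarrow> 'b binoid \<Rightarrow> 'a set \<Rightarrow> 'b set \<Rightarrow> ('a \<times> 'b) option set" where
  "smash_ideal M N P Q = insert None (Some ` {(a, b).
     a \<in> bcarrier M - {binf M} \<and> b \<in> bcarrier N - {binf N} \<and> (a \<in> P \<or> b \<in> Q)})"

lemma smash_ideal_simps [simp]:
  "None \<in> smash_ideal M N P Q"
  "Some (a, b) \<in> smash_ideal M N P Q \<longleftrightarrow>
     a \<in> bcarrier M \<and> a \<noteq> binf M \<and> b \<in> bcarrier N \<and> b \<noteq> binf N \<and> (a \<in> P \<or> b \<in> Q)"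
  by (auto simp: smash_ideal_def)

definition smash_inl :: "'a binoid \<Rightarrow> 'b binoid \<Rightarrow> 'a \<Rightarrow> ('a \<times> 'b) option" where
  "smash_inl M N a = (if a = binf M then None else Some (a, bzero N))"

definition smash_inr :: "'a binoid \<Rightarrow> 'b binoid \<Rightarrow> 'b \<Rightarrow> ('a \<times> 'b) option" where
  "smash_inr M N b = (if b = binf N then None else Some (bzero M, b))"

definition smash_fst_ideal :: "'a binoid \<Rightarrow> 'b binoid \<Rightarrow> ('a \<times> 'b) option set \<Rightarrow> 'a set" where
  "smash_fst_ideal M N R = bcarrier M \<inter> smash_inl M N -` R"

definition smash_snd_ideal :: "'a binoid \<Rightarrow> 'b binoid \<Rightarrow> ('a \<times> 'b) option set \<Rightarrow> 'b set" where
  "smash_snd_ideal M N R = bcarrier N \<inter> smash_inr M N -` R"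

context smash_setting
begin

lemma badd_smash_mem_smash_ideal_iff:
  assumes "a \<in> bcarrier M" "c \<in> bcarrier M" "b \<in> bcarrier N" "d \<in> bcarrier N"
    and "binf M \<in> P" "binf N \<in> Q"
  shows "badd (smash M N) (Some (a, b)) (Some (c, d)) \<in> smash_ideal M N P Q \<longleftrightarrow>
    badd M a c \<in> P \<or> badd N b d \<in> Q"
  using assms by (auto simp: M.add_closed N.add_closed)

lemma smash_ideal_add_mem:
  assumes P: "is_prime_ideal M P" and Q: "is_prime_ideal N Q"
    and x: "x \<in> smash_ideal M N P Q" and y: "y \<in> bcarrier (smash M N)"
  shows "badd (smash M N) x y \<in> smash_ideal M N P Q"
proof (cases "x = None \<or> y = None")
  case False
  have "x \<in> bcarrier (smash M N)"
    using x by (auto simp: smash_ideal_def)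
  with y False obtain a b c d where xy_eq: "x = Some (a, b)" "y = Some (c, d)"
    and ab: "a \<in> bcarrier M" "b \<in> bcarrier N" and cd: "c \<in> bcarrier M" "d \<in> bcarrier N"
    by (auto elim!: smash_carrierE)
  have "a \<in> P \<or> b \<in> Q"
    using x xy_eq(1) by simp
  then have "badd M a c \<in> P \<or> badd N b d \<in> Q"
    using prime_ideal_add_mem[OF P _ cd(1)] prime_ideal_add_mem[OF Q _ cd(2)] by blast
  moreover have "binf M \<in> P" "binf N \<in> Q"
    using P Q M.ideal_inf_mem N.ideal_inf_mem unfolding is_prime_ideal_def by blast+
  ultimately show ?thesis
    unfolding xy_eq using badd_smash_mem_smash_ideal_iff[OF ab(1) cd(1) ab(2) cd(2)] by blast
qed auto

lemma smash_ideal_add_memD: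
  assumes P: "is_prime_ideal M P" and Q: "is_prime_ideal N Q"
    and xy: "badd (smash M N) x y \<in> smash_ideal M N P Q"
    and x: "x \<in> bcarrier (smash M N)" and y: "y \<in> bcarrier (smash M N)"
  shows "x \<in> smash_ideal M N P Q \<or> y \<in> smash_ideal M N P Q"
proof (cases "x = None \<or> y = None")
  case False
  with x y obtain a b c d where xy_eq: "x = Some (a, b)" "y = Some (c, d)"
    and ab: "a \<in> bcarrier M" "b \<in> bcarrier N" and cd: "c \<in> bcarrier M" "d \<in> bcarrier N"
    by (auto elim!: smash_carrierE)
  have "binf M \<in> P" "binf N \<in> Q"
    using P Q M.ideal_inf_mem N.ideal_inf_mem unfolding is_prime_ideal_def by blast+
  then have "badd M a c \<in> P \<or> badd N b d \<in> Q"
    using xy badd_smash_mem_smash_ideal_iff[OF ab(1) cd(1) ab(2) cd(2)] unfolding xy_eq by blast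
  then have "(a \<in> P \<or> b \<in> Q) \<or> (c \<in> P \<or> d \<in> Q)"
    using prime_ideal_add_memD[OF P ab(1) cd(1)] prime_ideal_add_memD[OF Q ab(2) cd(2)] by blast
  then show ?thesis
    using x y xy_eq by auto
qed auto

lemma smash_ideal_prime:
  assumes P: "is_prime_ideal M P" and Q: "is_prime_ideal N Q"
  shows "is_prime_ideal (smash M N) (smash_ideal M N P Q)"
proof -
  have "None \<in> smash_ideal M N P Q" "smash_ideal M N P Q \<subseteq> bcarrier (smash M N)"
    by (auto simp: smash_ideal_def)
  moreover have "bzero (smash M N) \<notin> smash_ideal M N P Q"
    using P Q by (simp add: M.prime_ideal_zero_not_mem N.prime_ideal_zero_not_mem)
  ultimately show ?thesis
    unfolding is_prime_ideal_def is_ideal_def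
    using S.zero_closed smash_ideal_add_mem[OF P Q] smash_ideal_add_memD[OF P Q]
    by (intro conjI ballI impI) blast+
qed

lemma binoid_hom_smash_inl: "binoid_hom M (smash M N) (smash_inl M N)"
  unfolding binoid_hom_def smash_inl_def
  by (auto simp: M.add_closed dest: M.add_inf_left M.add_inf_right)

lemma binoid_hom_smash_inr: "binoid_hom N (smash M N) (smash_inr M N)"
  unfolding binoid_hom_def smash_inr_def
  by (auto simp: N.add_closed)

lemma smash_fst_ideal_prime:
  "is_prime_ideal (smash M N) R \<Longrightarrow> is_prime_ideal M (smash_fst_ideal M N R)"
  unfolding smash_fst_ideal_def
  by (rule M.prime_ideal_vimage[OF S.binoid_axioms binoid_hom_smash_inl])

lemma smash_snd_ideal_prime:
  "is_prime_ideal (smash M N) R \<Longrightarrow> is_prime_ideal N (smash_snd_ideal M N R)"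
  unfolding smash_snd_ideal_def
  by (rule N.prime_ideal_vimage[OF S.binoid_axioms binoid_hom_smash_inr])

lemma badd_smash_inl_inr:
  assumes "a \<in> bcarrier M" "a \<noteq> binf M" "b \<in> bcarrier N" "b \<noteq> binf N"
  shows "badd (smash M N) (smash_inl M N a) (smash_inr M N b) = Some (a, b)"
    and "badd (smash M N) (smash_inr M N b) (smash_inl M N a) = Some (a, b)"
  using assms by (simp_all add: smash_inl_def smash_inr_def)

lemma prime_ideal_smash_eq:
  assumes R: "is_prime_ideal (smash M N) R"
  shows "R = smash_ideal M N (smash_fst_ideal M N R) (smash_snd_ideal M N R)"
proof (rule set_eqI)
  fix x
  have R_carrier: "R \<subseteq> bcarrier (smash M N)"
    using R unfolding is_prime_ideal_def is_ideal_def by blast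
  have "None \<in> R"
    using R S.ideal_inf_mem unfolding is_prime_ideal_def by simp
  moreover have Some_mem_iff: "Some (a, b) \<in> R \<longleftrightarrow> smash_inl M N a \<in> R \<or> smash_inr M N b \<in> R"
    if "a \<in> bcarrier M" "a \<noteq> binf M" "b \<in> bcarrier N" "b \<noteq> binf N" for a b
  proof -
    have "smash_inl M N a \<in> bcarrier (smash M N)" "smash_inr M N b \<in> bcarrier (smash M N)"
      using that by (simp_all add: smash_inl_def smash_inr_def)
    then show ?thesis
      using badd_smash_inl_inr[OF that] prime_ideal_add_memD[OF R] prime_ideal_add_mem[OF R]
      by metis
  qed
  moreover have Some_not_mem: "Some (a, b) \<notin> R"
    if "\<not> (a \<in> bcarrier M \<and> a \<noteq> binf M \<and> b \<in> bcarrier N \<and> b \<noteq> binf N)" for a b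
    using that R_carrier by auto
  ultimately show "x \<in> R \<longleftrightarrow> x \<in> smash_ideal M N (smash_fst_ideal M N R) (smash_snd_ideal M N R)"
  proof (cases x)
    case (Some p)
    then obtain a b where "x = Some (a, b)"
      by (cases p) auto
    then show ?thesis
      using Some_mem_iff[of a b] Some_not_mem[of a b]
      by (cases "a \<in> bcarrier M \<and> a \<noteq> binf M \<and> b \<in> bcarrier N \<and> b \<noteq> binf N")
        (auto simp: smash_fst_ideal_def smash_snd_ideal_def)
  qed simp
qed

lemma smash_fst_ideal_smash_ideal:
  assumes P: "is_prime_ideal M P" and Q: "is_prime_ideal N Q"
  shows "smash_fst_ideal M N (smash_ideal M N P Q) = P"
proof -
  have "binf M \<in> P" "P \<subseteq> bcarrier M" "bzero N \<notin> Q"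
    using P Q M.ideal_inf_mem N.prime_ideal_zero_not_mem
    unfolding is_prime_ideal_def is_ideal_def by simp_all
  then show ?thesis
    by (auto simp: smash_fst_ideal_def smash_inl_def split: if_splits)
qed

lemma smash_snd_ideal_smash_ideal:
  assumes P: "is_prime_ideal M P" and Q: "is_prime_ideal N Q"
  shows "smash_snd_ideal M N (smash_ideal M N P Q) = Q"
proof -
  have "binf N \<in> Q" "Q \<subseteq> bcarrier N" "bzero M \<notin> P"
    using P Q N.ideal_inf_mem M.prime_ideal_zero_not_mem
    unfolding is_prime_ideal_def is_ideal_def by simp_all
  then show ?thesis
    by (auto simp: smash_snd_ideal_def smash_inr_def split: if_splits)
qed

lemma smash_ideal_strict_mono:
  assumes "is_prime_ideal M P" "is_prime_ideal M P'" "is_prime_ideal N Q" "is_prime_ideal N Q'"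
    and "P \<subseteq> P'" "Q \<subseteq> Q'" "P \<noteq> P' \<or> Q \<noteq> Q'"
  shows "smash_ideal M N P Q \<subset> smash_ideal M N P' Q'"
proof
  show "smash_ideal M N P Q \<subseteq> smash_ideal M N P' Q'"
    using assms(5,6) unfolding smash_ideal_def by blast
  show "smash_ideal M N P Q \<noteq> smash_ideal M N P' Q'"
    using assms smash_fst_ideal_smash_ideal smash_snd_ideal_smash_ideal by metis
qed

lemma prime_ideal_smash_eqI:
  assumes "is_prime_ideal (smash M N) R" "is_prime_ideal (smash M N) R'"
    and "smash_fst_ideal M N R = smash_fst_ideal M N R'" "smash_snd_ideal M N R = smash_snd_ideal M N R'"
  shows "R = R'"
  using assms prime_ideal_smash_eq by metis

text \<open>
  Along a chain of primes of M \<and> N both induced primes grow weakly and, by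
  prime_ideal_smash_eqI, at least one of them strictly; collecting the strict steps in
  each factor splits the chain.
\<close>

lemma prime_chain_smash_split:
  "prime_chain (smash M N) r k \<Longrightarrow>
    \<exists>a b p p'. prime_chain M p a \<and> prime_chain N p' b \<and> a + b = k \<and>
      p a \<subseteq> smash_fst_ideal M N (r k) \<and> p' b \<subseteq> smash_snd_ideal M N (r k)"
proof (induction k)
  case 0
  then have "is_prime_ideal (smash M N) (r 0)"
    unfolding prime_chain_def by simp
  then have "prime_chain M (\<lambda>_. smash_fst_ideal M N (r 0)) 0"
    "prime_chain N (\<lambda>_. smash_snd_ideal M N (r 0)) 0"
    using smash_fst_ideal_prime smash_snd_ideal_prime unfolding prime_chain_def by auto
  then show ?case by fastforce
next
  case (Suc k)
  let ?fst = "\<lambda>i. smash_fst_ideal M N (r i)" and ?snd = "\<lambda>i. smash_snd_ideal M N (r i)"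
  obtain a b p p' where IH: "prime_chain M p a" "prime_chain N p' b" "a + b = k"
    "p a \<subseteq> ?fst k" "p' b \<subseteq> ?snd k"
    using Suc prime_chain_truncate[OF Suc.prems] by (metis le_SucI order_refl)
  have R: "is_prime_ideal (smash M N) (r k)" "is_prime_ideal (smash M N) (r (Suc k))"
    and less: "r k \<subset> r (Suc k)"
    using Suc.prems unfolding prime_chain_def by auto
  have mono: "?fst k \<subseteq> ?fst (Suc k)" "?snd k \<subseteq> ?snd (Suc k)"
    using less unfolding smash_fst_ideal_def smash_snd_ideal_def by auto
  consider "?fst k \<noteq> ?fst (Suc k)" | "?snd k \<noteq> ?snd (Suc k)"
    using prime_ideal_smash_eqI[OF R] less by blast
  then show ?case
  proof cases
    case 1
    then have "prime_chain M (p(Suc a := ?fst (Suc k))) (Suc a)"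
      using IH(1,4) mono smash_fst_ideal_prime[OF R(2)] unfolding prime_chain_def
      by (auto simp: le_Suc_eq less_Suc_eq)
    moreover have "p' b \<subseteq> ?snd (Suc k)"
      using IH(5) mono(2) by blast
    ultimately show ?thesis
      using IH(2,3) by fastforce
  next
    case 2
    then have "prime_chain N (p'(Suc b := ?snd (Suc k))) (Suc b)"
      using IH(2,5) mono smash_snd_ideal_prime[OF R(2)] unfolding prime_chain_def
      by (auto simp: le_Suc_eq less_Suc_eq)
    moreover have "p a \<subseteq> ?fst (Suc k)"
      using IH(4) mono(1) by blast
    ultimately show ?thesis
      using IH(1,3) by fastforce
  qed
qed

lemma prime_chain_smash_concat:
  assumes p: "prime_chain M p a" and q: "prime_chain N q b"
  shows "prime_chain (smash M N)
    (\<lambda>i. if i \<le> a then smash_ideal M N (p i) (q 0) else smash_ideal M N (p a) (q (i - a))) (a + b)"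
proof -
  have p_prime: "\<And>i. i \<le> a \<Longrightarrow> is_prime_ideal M (p i)" and p_less: "\<And>i. i < a \<Longrightarrow> p i \<subset> p (Suc i)"
    using p unfolding prime_chain_def by auto
  have q_prime: "\<And>i. i \<le> b \<Longrightarrow> is_prime_ideal N (q i)" and q_less: "\<And>i. i < b \<Longrightarrow> q i \<subset> q (Suc i)"
    using q unfolding prime_chain_def by auto
  show ?thesis
    unfolding prime_chain_def
  proof (intro conjI allI impI)
    fix i assume "i \<le> a + b"
    then show "is_prime_ideal (smash M N)
      (if i \<le> a then smash_ideal M N (p i) (q 0) else smash_ideal M N (p a) (q (i - a)))"
      using smash_ideal_prime p_prime q_prime by auto
  next
    fix i assume i: "i < a + b"
    consider "Suc i \<le> a" | "i = a" | "a < i"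
      by linarith
    then show "(if i \<le> a then smash_ideal M N (p i) (q 0) else smash_ideal M N (p a) (q (i - a))) \<subset>
      (if Suc i \<le> a then smash_ideal M N (p (Suc i)) (q 0) else smash_ideal M N (p a) (q (Suc i - a)))"
    proof cases
      case 1
      then show ?thesis
        using smash_ideal_strict_mono p_prime q_prime p_less[of i] by auto
    next
      case 2
      then show ?thesis
        using smash_ideal_strict_mono p_prime q_prime q_less[of 0] i by auto
    next
      case 3
      then have "Suc i - a = Suc (i - a)" "i - a < b"
        using i by auto
      then show ?thesis
        using 3 smash_ideal_strict_mono p_prime q_prime q_less[of "i - a"] by auto
    qed
  qed
qed

lemma bdim_smash: "bdim (smash M N) = bdim M + bdim N"
proof (rule antisym)
  show "bdim (smash M N) \<le> bdim M + bdim N"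
    unfolding bdim_eq_Sup_prime_chain[of "smash M N"]
  proof (rule Sup_least)
    fix x assume "x \<in> {enat k |k. \<exists>r. prime_chain (smash M N) r k}"
    then obtain k r where "x = enat k" "prime_chain (smash M N) r k"
      by blast
    then obtain a b p p' where "prime_chain M p a" "prime_chain N p' b" "x = enat a + enat b"
      using prime_chain_smash_split by fastforce
    then show "x \<le> bdim M + bdim N"
      using prime_chain_le_bdim add_mono by metis
  qed
  show "bdim M + bdim N \<le> bdim (smash M N)"
  proof (rule add_le_enat_by_finite)
    fix a b assume "enat a \<le> bdim M" "enat b \<le> bdim N"
    then obtain p q where "prime_chain M p a" "prime_chain N q b"
      by (metis M.prime_chain_of_le_bdim N.prime_chain_of_le_bdim)
    then show "enat (a + b) \<le> bdim (smash M N)"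
      using prime_chain_smash_concat prime_chain_le_bdim by blast
  qed
qed

end

section \<open>The Hilbert-Kunz function of the smash product\<close>

lemma frob_ideal_iff:
  "x \<in> frob_ideal B q I \<longleftrightarrow> (\<exists>c\<in>I. \<exists>n\<in>bcarrier B. x = badd B (bmult B q c) n)"
  by (auto simp: frob_ideal_def ideal_gen_def)

lemma HKF_eq_card:
  "binf B \<in> frob_ideal B q (bplus_part B) \<Longrightarrow>
    HKF B q = card (bcarrier B - frob_ideal B q (bplus_part B))"
  unfolding HKF_def by (cases "finite (bcarrier B - frob_ideal B q (bplus_part B))") auto

context nontrivial_binoid
begin

lemma inf_mem_frob_ideal:
  assumes "0 < q"
  shows "binf B \<in> frob_ideal B q (bplus_part B)"
proof -
  have "binf B \<in> bplus_part B"
    using ideal_inf_mem bplus_part_prime unfolding is_prime_ideal_def by blast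
  with assms show ?thesis
    unfolding frob_ideal_iff by (intro bexI[of _ "binf B"] bexI[of _ "bzero B"]) simp_all
qed

end

context smash_setting
begin

lemma bmult_smash_Some:
  assumes a: "a \<in> bcarrier M" and b: "b \<in> bcarrier N"
  shows "bmult (smash M N) q (Some (a, b)) =
    (if bmult M q a \<noteq> binf M \<and> bmult N q b \<noteq> binf N
     then Some (bmult M q a, bmult N q b) else None)"
proof (induction q)
  case 0
  then show ?case by (simp add: bmult_def)
next
  case (Suc q)
  then show ?case
    using a b M.bmult_closed[OF a, of q] N.bmult_closed[OF b, of q]
    by (auto simp: M.bmult_Suc N.bmult_Suc S.bmult_Suc)
qed

lemma Some_mem_bunits_smash_iff:
  assumes a: "a \<in> bcarrier M" "a \<noteq> binf M" and b: "b \<in> bcarrier N" "b \<noteq> binf N"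
  shows "Some (a, b) \<in> bunits (smash M N) \<longleftrightarrow> a \<in> bunits M \<and> b \<in> bunits N"
proof
  assume "Some (a, b) \<in> bunits (smash M N)"
  then obtain y where y: "y \<in> bcarrier (smash M N)"
    and sum: "badd (smash M N) (Some (a, b)) y = bzero (smash M N)"
    unfolding bunits_def by blast
  from y show "a \<in> bunits M \<and> b \<in> bunits N"
  proof (cases rule: smash_carrierE)
    case (2 c d)
    from sum have "badd M a c = bzero M \<and> badd N b d = bzero N"
      unfolding \<open>y = Some (c, d)\<close> by (simp split: if_splits)
    then show ?thesis
      using a(1) b(1) 2 unfolding bunits_def by blast
  qed (use sum in simp)
next
  assume "a \<in> bunits M \<and> b \<in> bunits N"
  then obtain c d where c: "c \<in> bcarrier M" "badd M a c = bzero M"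
    and d: "d \<in> bcarrier N" "badd N b d = bzero N"
    unfolding bunits_def by blast
  have "c \<noteq> binf M"
    using c(2) a(1) by (metis M.add_inf_right M.zero_neq_inf)
  have "d \<noteq> binf N"
    using d(2) b(1) by (metis N.add_inf_right N.zero_neq_inf)
  with \<open>c \<noteq> binf M\<close> a b c d
  have "Some (c, d) \<in> bcarrier (smash M N)" "Some (a, b) \<in> bcarrier (smash M N)"
    "badd (smash M N) (Some (a, b)) (Some (c, d)) = bzero (smash M N)"
    by simp_all
  then show "Some (a, b) \<in> bunits (smash M N)"
    unfolding bunits_def by blast
qed

lemma Some_mem_frob_ideal_smashI:
  assumes q: "0 < q"
    and c: "c \<in> bcarrier M" and m: "m \<in> bcarrier M" and d: "d \<in> bcarrier N" and n: "n \<in> bcarrier N"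
    and nonunit: "c \<notin> bunits M \<or> d \<notin> bunits N"
    and a: "a = badd M (bmult M q c) m" "a \<noteq> binf M"
    and b: "b = badd N (bmult N q d) n" "b \<noteq> binf N"
  shows "Some (a, b) \<in> frob_ideal (smash M N) q (bplus_part (smash M N))"
proof -
  have qc: "bmult M q c \<noteq> binf M" "m \<noteq> binf M"
    using a c m M.bmult_closed[OF c] by auto
  have qd: "bmult N q d \<noteq> binf N" "n \<noteq> binf N"
    using b d n N.bmult_closed[OF d] by auto
  have "c \<noteq> binf M" "d \<noteq> binf N"
    using qc(1) qd(1) q by auto
  then have "Some (c, d) \<in> bplus_part (smash M N)"
    using c d nonunit Some_mem_bunits_smash_iff[OF c _ d] unfolding bplus_part_def by simp
  moreover have "bmult (smash M N) q (Some (c, d)) = Some (bmult M q c, bmult N q d)"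
    using bmult_smash_Some[OF c d] qc qd by simp
  moreover have "Some (m, n) \<in> bcarrier (smash M N)"
    using m n qc qd by simp
  moreover have "badd (smash M N) (Some (bmult M q c, bmult N q d)) (Some (m, n)) = Some (a, b)"
    using a b by simp
  ultimately show ?thesis
    unfolding frob_ideal_iff by metis
qed

lemma Some_mem_frob_ideal_smashE:
  assumes q: "0 < q" and mem: "Some (a, b) \<in> frob_ideal (smash M N) q (bplus_part (smash M N))"
  obtains c d m n where "c \<in> bcarrier M" "d \<in> bcarrier N" "m \<in> bcarrier M" "n \<in> bcarrier N"
    "c \<notin> bunits M \<or> d \<notin> bunits N"
    "a = badd M (bmult M q c) m" "b = badd N (bmult N q d) n"
proof -
  obtain y z where y: "y \<in> bplus_part (smash M N)" and z: "z \<in> bcarrier (smash M N)"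
    and ab: "Some (a, b) = badd (smash M N) (bmult (smash M N) q y) z"
    using mem unfolding frob_ideal_iff by blast
  have y_carrier: "y \<in> bcarrier (smash M N)" and y_nonunit: "y \<notin> bunits (smash M N)"
    using y unfolding bplus_part_def by blast+
  have "y \<noteq> None"
  proof
    assume "y = None"
    then have "bmult (smash M N) q y = None"
      using q S.bmult_inf by simp
    with ab show False
      by simp
  qed
  with y_carrier obtain c d where y_eq: "y = Some (c, d)" and c: "c \<in> bcarrier M" "c \<noteq> binf M"
    and d: "d \<in> bcarrier N" "d \<noteq> binf N"
    by (cases rule: smash_carrierE) auto
  have "z \<noteq> None"
  proof
    assume "z = None"
    with ab show False
      by simp
  qed
  with z obtain m n where z_eq: "z = Some (m, n)" and m: "m \<in> bcarrier M" and n: "n \<in> bcarrier N"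
    by (cases rule: smash_carrierE) auto
  have "a = badd M (bmult M q c) m" "b = badd N (bmult N q d) n"
    using ab unfolding y_eq z_eq bmult_smash_Some[OF c(1) d(1)] by (auto split: if_splits)
  moreover have "c \<notin> bunits M \<or> d \<notin> bunits N"
    using y_nonunit Some_mem_bunits_smash_iff[OF c d] unfolding y_eq by blast
  ultimately show thesis
    using that c(1) d(1) m n by blast
qed

lemma Some_mem_frob_ideal_smash_iff:
  assumes q: "0 < q" and a: "a \<in> bcarrier M" "a \<noteq> binf M" and b: "b \<in> bcarrier N" "b \<noteq> binf N"
  shows "Some (a, b) \<in> frob_ideal (smash M N) q (bplus_part (smash M N)) \<longleftrightarrow>
    a \<in> frob_ideal M q (bplus_part M) \<or> b \<in> frob_ideal N q (bplus_part N)"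
proof
  assume "Some (a, b) \<in> frob_ideal (smash M N) q (bplus_part (smash M N))"
  then show "a \<in> frob_ideal M q (bplus_part M) \<or> b \<in> frob_ideal N q (bplus_part N)"
    by (rule Some_mem_frob_ideal_smashE[OF q]) (auto simp: frob_ideal_iff bplus_part_def)
next
  assume "a \<in> frob_ideal M q (bplus_part M) \<or> b \<in> frob_ideal N q (bplus_part N)"
  then show "Some (a, b) \<in> frob_ideal (smash M N) q (bplus_part (smash M N))"
  proof
    assume "a \<in> frob_ideal M q (bplus_part M)"
    then obtain c m where "c \<in> bplus_part M" "m \<in> bcarrier M" "a = badd M (bmult M q c) m"
      unfolding frob_ideal_iff by blast
    then show ?thesis
      using a b q by (intro Some_mem_frob_ideal_smashI[where d = "bzero N" and n = b])
        (auto simp: bplus_part_def)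
  next
    assume "b \<in> frob_ideal N q (bplus_part N)"
    then obtain d n where "d \<in> bplus_part N" "n \<in> bcarrier N" "b = badd N (bmult N q d) n"
      unfolding frob_ideal_iff by blast
    then show ?thesis
      using a b q by (intro Some_mem_frob_ideal_smashI[where c = "bzero M" and m = a])
        (auto simp: bplus_part_def)
  qed
qed

lemma smash_carrier_diff_frob_ideal:
  assumes q: "0 < q"
  shows "bcarrier (smash M N) - frob_ideal (smash M N) q (bplus_part (smash M N)) =
    Some ` ((bcarrier M - frob_ideal M q (bplus_part M)) \<times> (bcarrier N - frob_ideal N q (bplus_part N)))"
    (is "?lhs = Some ` (?QM \<times> ?QN)")
proof (rule set_eqI)
  fix x
  show "x \<in> ?lhs \<longleftrightarrow> x \<in> Some ` (?QM \<times> ?QN)"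
  proof (cases x)
    case None
    then show ?thesis
      using S.inf_mem_frob_ideal[OF q] by auto
  next
    case (Some p)
    then obtain a b where x: "x = Some (a, b)"
      by (cases p) auto
    show ?thesis
    proof (cases "a \<in> bcarrier M \<and> a \<noteq> binf M \<and> b \<in> bcarrier N \<and> b \<noteq> binf N")
      case True
      then show ?thesis
        using Some_mem_frob_ideal_smash_iff[OF q, of a b] x by auto
    next
      case False
      then show ?thesis
        using x M.inf_mem_frob_ideal[OF q] N.inf_mem_frob_ideal[OF q] by auto
    qed
  qed
qed

lemma HKF_smash:
  assumes q: "0 < q"
  shows "HKF (smash M N) q = HKF M q * HKF N q"
proof -
  have "HKF (smash M N) q =
    card ((bcarrier M - frob_ideal M q (bplus_part M)) \<times> (bcarrier N - frob_ideal N q (bplus_part N)))"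
    using HKF_eq_card[OF S.inf_mem_frob_ideal[OF q]] smash_carrier_diff_frob_ideal[OF q]
      card_image[of Some] by simp
  also have "\<dots> = HKF M q * HKF N q"
    using HKF_eq_card[OF M.inf_mem_frob_ideal[OF q]] HKF_eq_card[OF N.inf_mem_frob_ideal[OF q]]
    by (simp add: card_cartesian_product)
  finally show ?thesis .
qed

lemma HK_ratio_smash:
  assumes "bdim M \<noteq> \<infinity>" "bdim N \<noteq> \<infinity>" "0 < q"
  shows "HK_ratio (smash M N) q = HK_ratio M q * HK_ratio N q"
proof -
  obtain dM dN where "bdim M = enat dM" "bdim N = enat dN"
    using assms(1,2) by auto
  then show ?thesis
    unfolding HK_ratio_def using HKF_smash[OF assms(3)] bdim_smash by (simp add: power_add)
qed

end

theorem mainTheorem10: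
  fixes M :: "'a binoid" and N :: "'b binoid"
  assumes "is_binoid M" and "is_binoid N"
    and "fin_gen M" and "fin_gen N"
    and "semipositive M" and "semipositive N"
    and "bdim M \<noteq> \<infinity>" and "bdim N \<noteq> \<infinity>"
    and "ehk_exists M" and "ehk_exists N"
  shows "ehk_exists (smash M N) \<and> ehk (smash M N) = ehk M * ehk N"
proof -
  interpret smash_setting M N
    using assms(1,2,5,6) by unfold_locales (auto simp: semipositive_def)
  have "HK_ratio M \<longlonglongrightarrow> ehk M" "HK_ratio N \<longlonglongrightarrow> ehk N"
    using assms(9,10) unfolding ehk_exists_def ehk_def by (simp_all add: convergent_LIMSEQ_iff)
  then have "(\<lambda>q. HK_ratio M q * HK_ratio N q) \<longlonglongrightarrow> ehk M * ehk N"
    by (rule tendsto_mult)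
  moreover have "\<forall>\<^sub>F q in sequentially. HK_ratio M q * HK_ratio N q = HK_ratio (smash M N) q"
    using HK_ratio_smash[OF assms(7,8)] by (intro eventually_sequentiallyI[of 1]) simp
  ultimately have "HK_ratio (smash M N) \<longlonglongrightarrow> ehk M * ehk N"
    by (rule Lim_transform_eventually)
  then show ?thesis
    unfolding ehk_exists_def ehk_def by (auto simp: convergent_def limI)
qed

end
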